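(* Let $c\in(0,1]$ be a constant. For every $N,M$, every input $X=(x_1,\dots,x_N)\in[M]^N$ and every (sufficiently large) positive integer $T$, run the following sampling procedure $\mathcal{S}_T$: set $U:=24T^{1+c}\ln T$; choose indices $i_1,\dots,i_U\in[N]$ independently and uniformly at random (with replacement); query $x_{i_1},\dots,x_{i_U}$; for each $j\in[M]$ let $z_j$ be the number of occurrences of $j$ in $(x_{i_1},\dots,x_{i_U})$, and output $\widetilde\kappa_j:=\frac{N}{U}z_j$. Let $\kappa_j$ be the number of indices $i\in[N]$ with $x_i=j$. Then with probability $1-O(1/T)$ (the implied constant independent of $N,M,X$), we have \[ |\widetilde\kappa_j-\kappa_j|\le \frac{N}{T}+\frac{\kappa_j}{T^{c}}\quad\text{for all } j\in[M]. \] *)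

theory Defs
  imports "HOL-Probability.Probability"
begin

definition sample_size :: "real \<Rightarrow> nat \<Rightarrow> nat" where
  "sample_size c T = nat \<lceil>24 * real T powr (1 + c) * ln (real T)\<rceil>"

definition index_sample :: "nat \<Rightarrow> nat \<Rightarrow> (nat \<Rightarrow> nat) pmf" where
  "index_sample N U = Pi_pmf {..<U} 0 (\<lambda>_. pmf_of_set {1..N})"

definition sample_count :: "(nat \<Rightarrow> nat) \<Rightarrow> nat \<Rightarrow> (nat \<Rightarrow> nat) \<Rightarrow> nat \<Rightarrow> nat" where
  "sample_count X U idx j = card {u \<in> {..<U}. X (idx u) = j}"

definition estimate :: "(nat \<Rightarrow> nat) \<Rightarrow> nat \<Rightarrow> nat \<Rightarrow> (nat \<Rightarrow> nat) \<Rightarrow> nat \<Rightarrow> real" where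
  "estimate X N U idx j = real N / real U * real (sample_count X U idx j)"

definition true_count :: "(nat \<Rightarrow> nat) \<Rightarrow> nat \<Rightarrow> nat \<Rightarrow> nat" where
  "true_count X N j = card {i \<in> {1..N}. X i = j}"

end

theory Submission
  imports Defs
begin

text \<open>Each count \<open>z\<^sub>j\<close> is a sum of \<open>U\<close> independent Bernoulli variables with mean
  \<open>q\<^sub>j = \<kappa>\<^sub>j / N\<close>, so Chernoff bounds control its deviation from \<open>U q\<^sub>j\<close> by
  \<open>U q\<^sub>j / T\<^sup>c + U / T\<close>. The point is that the failure probability for symbol \<open>j\<close>
  is \<open>O(q\<^sub>j / T)\<close> rather than merely \<open>O(1 / T)\<close>: for the upper tail, Markov's inequality
  is applied to \<open>exp (s z\<^sub>j) - 1\<close>, whose mean \<open>(1 + q\<^sub>j (exp s - 1))\<^sup>U - 1\<close> is of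
  order \<open>s U q\<^sub>j\<close>; the lower tail event is empty unless \<open>q\<^sub>j \<ge> 1 / T\<close>. As the
  \<open>q\<^sub>j\<close> sum to at most 1, the union bound over all symbols costs only \<open>O(1 / T)\<close>,
  independently of \<open>M\<close>.\<close>

lemma exp_mult_card_eq_prod:
  assumes "finite A"
  shows "exp (s * real (card {u\<in>A. P u})) = (\<Prod>u\<in>A. if P u then exp s else 1)"
proof -
  have "(\<Prod>u\<in>A. if P u then exp s else 1) = exp s ^ card {u\<in>A. P u}"
    using assms by (simp add: prod.If_cases Int_def)
  then show ?thesis by (simp add: exp_of_nat2_mult)
qed

lemma expectation_exp_card_Pi_pmf:
  assumes "finite A"
  shows "measure_pmf.expectation (Pi_pmf A d (\<lambda>_. p)) (\<lambda>f. exp (s * real (card {u\<in>A. P (f u)})))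
       = (1 + measure_pmf.prob p {x. P x} * (exp s - 1)) ^ card A"
proof -
  have factor: "measure_pmf.expectation p (\<lambda>x. if P x then exp s else 1)
      = 1 + measure_pmf.prob p {x. P x} * (exp s - 1)"
  proof -
    have "(\<lambda>x. if P x then exp s else 1) = (\<lambda>x. 1 + (exp s - 1) * indicator {x. P x} x)"
      by (auto simp: indicator_def)
    moreover have "integrable (measure_pmf p) (indicat_real {x. P x})"
      by (rule measure_pmf.integrable_const_bound[where B = 1]) auto
    ultimately show ?thesis
      by (simp add: mult.commute)
  qed
  have "measure_pmf.expectation (Pi_pmf A d (\<lambda>_. p)) (\<lambda>f. exp (s * real (card {u\<in>A. P (f u)})))
      = measure_pmf.expectation (Pi_pmf A d (\<lambda>_. p)) (\<lambda>f. \<Prod>u\<in>A. if P (f u) then exp s else 1)"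
    using assms by (simp add: exp_mult_card_eq_prod)
  also have "\<dots> = (\<Prod>u\<in>A. measure_pmf.expectation p (\<lambda>x. if P x then exp s else 1))"
    using assms
    by (intro expectation_prod_Pi_pmf[where f = "\<lambda>_ x. if P x then exp s else 1"])
       (auto intro!: measure_pmf.integrable_const_bound[where B = "max (exp s) 1"])
  finally show ?thesis using factor by simp
qed

lemma one_plus_power_le_exp:
  fixes x :: real
  assumes "0 \<le> 1 + x"
  shows "(1 + x) ^ n \<le> exp (real n * x)"
proof -
  have "(1 + x) ^ n \<le> exp x ^ n"
    using assms by (intro power_mono exp_ge_add_one_self)
  then show ?thesis by (simp add: exp_of_nat_mult)
qed

lemma exp_minus_one_le: "exp y - 1 \<le> y * exp (y::real)"
proof -
  have "(1 - y) * exp y \<le> exp (-y) * exp y"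
    using exp_ge_add_one_self[of "-y"] by (intro mult_right_mono) simp_all
  then show ?thesis by (simp add: exp_minus field_simps)
qed

lemma exp_minus_le:
  fixes s :: real
  assumes "0 \<le> s"
  shows "exp (- s) \<le> 1 - s + s\<^sup>2"
proof -
  have "exp (- s) \<le> 1 / (1 + s)"
    using assms exp_ge_add_one_self[of s] by (simp add: exp_minus field_simps)
  also have "\<dots> \<le> 1 - s + s\<^sup>2"
    using assms by (simp add: field_simps power2_eq_square)
  finally show ?thesis .
qed

lemma integrable_exp_card_Pi_pmf:
  assumes "finite A"
  shows "integrable (Pi_pmf A d (\<lambda>_. p)) (\<lambda>f. exp (s * real (card {u\<in>A. P (f u)})))"
proof (rule measure_pmf.integrable_const_bound[where B = "exp (\<bar>s\<bar> * real (card A))"])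
  have "s * real (card {u\<in>A. P (f u)}) \<le> \<bar>s\<bar> * real (card A)" for f
  proof -
    have "card {u\<in>A. P (f u)} \<le> card A"
      using assms by (intro card_mono) auto
    then show ?thesis
      by (meson abs_ge_self abs_ge_zero mult_mono of_nat_0_le_iff of_nat_le_iff)
  qed
  then show "AE f in Pi_pmf A d (\<lambda>_. p). norm (exp (s * real (card {u\<in>A. P (f u)})))
      \<le> exp (\<bar>s\<bar> * real (card A))"
    by simp
qed simp

lemma prob_card_Pi_pmf_ge:
  fixes p :: "'a pmf" and P :: "'a \<Rightarrow> bool" and s a t :: real
  defines "q \<equiv> measure_pmf.prob p {x. P x}"
  assumes A: "finite A" and s: "0 < s" "s \<le> 1" and ea: "2 \<le> exp (s * a)"
    and a: "real (card A) * q * (1 + s) + t \<le> a"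
  shows "measure_pmf.prob (Pi_pmf A d (\<lambda>_. p)) {f. a \<le> real (card {u\<in>A. P (f u)})}
       \<le> 4 * s * real (card A) * q * exp (- s * t)"
proof -
  define n where "n = real (card A)"
  define Z where "Z = (\<lambda>f. real (card {u\<in>A. P (f u)}))"
  define w where "w = exp s - 1"
  let ?M = "measure_pmf (Pi_pmf A d (\<lambda>_. p))"
  have q: "0 \<le> q" unfolding q_def by simp
  have w_le: "w \<le> s + s\<^sup>2"
    using s exp_bound[of s] by (simp add: w_def)
  have "s\<^sup>2 \<le> s"
    using s mult_left_mono[of s 1 s] by (simp add: power2_eq_square)
  then have w: "0 \<le> w" "w \<le> 2 * s"
    using s w_le by (auto simp: w_def)
  have exponent: "n * q * w - s * a \<le> - s * t"
  proof -
    have "n * q * w \<le> n * q * (s + s\<^sup>2)"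
      using w_le q by (intro mult_left_mono) (auto simp: n_def)
    moreover have "s * (n * q * (1 + s) + t) \<le> s * a"
      using s a by (intro mult_left_mono) (auto simp: n_def)
    ultimately show ?thesis by (simp add: algebra_simps power2_eq_square)
  qed
  have ea_pos: "0 < exp (s * a) - 1" using ea by linarith
  have "measure ?M {f. a \<le> Z f} \<le> measure ?M {f \<in> space ?M. exp (s * a) - 1 \<le> exp (s * Z f) - 1}"
    using s by (intro measure_pmf.finite_measure_mono) auto
  also have "\<dots> \<le> (\<integral>f. exp (s * Z f) - 1 \<partial>?M) / (exp (s * a) - 1)"
    using A s ea_pos unfolding Z_def
    by (intro integral_Markov_inequality_measure[where A = UNIV] Bochner_Integration.integrable_diff
          integrable_exp_card_Pi_pmf) auto
  also have "(\<integral>f. exp (s * Z f) - 1 \<partial>?M) = (1 + q * w) ^ card A - 1"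
    using A unfolding Z_def q_def w_def
    by (simp add: integrable_exp_card_Pi_pmf expectation_exp_card_Pi_pmf)
  also have "\<dots> \<le> exp (n * q * w) - 1"
    using one_plus_power_le_exp[of "q * w" "card A"] q w by (simp add: n_def mult.assoc)
  also have "\<dots> \<le> n * q * w * exp (n * q * w)"
    by (rule exp_minus_one_le)
  also have "n * q * w * exp (n * q * w) / (exp (s * a) - 1)
      \<le> n * q * w * exp (n * q * w) / (exp (s * a) / 2)"
    using ea ea_pos q w by (intro divide_left_mono) (auto simp: n_def)
  also have "\<dots> = 2 * n * q * w * exp (n * q * w - s * a)"
    by (simp add: exp_diff field_simps)
  also have "\<dots> \<le> 2 * n * q * (2 * s) * exp (- s * t)"
    using q w exponent by (intro mult_mono) (auto simp: n_def)
  finally show ?thesis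
    using ea_pos by (simp add: Z_def n_def divide_right_mono mult_ac)
qed

lemma prob_card_Pi_pmf_le:
  fixes p :: "'a pmf" and P :: "'a \<Rightarrow> bool" and s b :: real
  defines "q \<equiv> measure_pmf.prob p {x. P x}"
  assumes A: "finite A" and s: "0 \<le> s"
  shows "measure_pmf.prob (Pi_pmf A d (\<lambda>_. p)) {f. real (card {u\<in>A. P (f u)}) \<le> b}
       \<le> exp (s * b - real (card A) * q * (s - s\<^sup>2))"
proof -
  define n where "n = real (card A)"
  define Z where "Z = (\<lambda>f. real (card {u\<in>A. P (f u)}))"
  define w where "w = exp (- s) - 1"
  let ?M = "measure_pmf (Pi_pmf A d (\<lambda>_. p))"
  have q: "0 \<le> q" "q \<le> 1" unfolding q_def by simp_all
  have w: "-1 \<le> w" "w \<le> - s + s\<^sup>2"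
    using exp_minus_le[OF s] by (simp_all add: w_def)
  have "-1 \<le> q * w"
    using q w mult_left_mono[of "-1" w q] by linarith
  have "measure ?M {f. Z f \<le> b} \<le> measure ?M {f \<in> space ?M. exp (- s * b) \<le> exp (- s * Z f)}"
    using s by (intro measure_pmf.finite_measure_mono) (auto intro: mult_left_mono)
  also have "\<dots> \<le> (\<integral>f. exp (- s * Z f) \<partial>?M) / exp (- s * b)"
    using A unfolding Z_def
    by (intro integral_Markov_inequality_measure[where A = UNIV] integrable_exp_card_Pi_pmf) auto
  also have "(\<integral>f. exp (- s * Z f) \<partial>?M) = (1 + q * w) ^ card A"
    using A unfolding Z_def q_def w_def by (rule expectation_exp_card_Pi_pmf)
  also have "\<dots> \<le> exp (n * q * w)"
    using one_plus_power_le_exp[of "q * w" "card A"] \<open>-1 \<le> q * w\<close> by (simp add: n_def mult.assoc)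
  also have "exp (n * q * w) / exp (- s * b) = exp (s * b + n * q * w)"
    by (simp add: exp_diff[symmetric])
  also have "\<dots> \<le> exp (s * b - n * q * (s - s\<^sup>2))"
    using mult_left_mono[OF w(2), of "n * q"] q by (simp add: n_def algebra_simps)
  finally show ?thesis
    by (simp add: Z_def n_def divide_right_mono)
qed

lemma exp_minus_of_nat_mult_ln:
  fixes x :: real
  assumes "0 < x"
  shows "exp (- (real n * ln x)) = 1 / x ^ n"
  using assms by (simp add: exp_minus exp_of_nat_mult inverse_eq_divide)

lemma sample_size_bounds:
  assumes T_ge: "2 \<le> T" and c: "0 \<le> c" "c \<le> 1"
  shows "24 * ln (real T) \<le> real (sample_size c T) / real T / real T powr c"
    and "real (sample_size c T) \<le> 25 * real T ^ 3"
    and "0 < sample_size c T"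
proof -
  have T: "2 \<le> real T" using T_ge by simp
  have ln: "0 < ln (real T)" "ln (real T) \<le> real T"
    using T ln_le_minus_one[of "real T"] by simp_all
  have split: "real T powr (1 + c) = real T * real T powr c"
    using T by (simp add: powr_add)
  have lower: "24 * real T * real T powr c * ln (real T) \<le> real (sample_size c T)"
    using real_nat_ceiling_ge[of "24 * real T powr (1 + c) * ln (real T)"]
    by (simp add: sample_size_def split mult_ac)
  then show "24 * ln (real T) \<le> real (sample_size c T) / real T / real T powr c"
    using T by (simp add: field_simps)
  have "0 < 24 * real T * real T powr c * ln (real T)"
    using T ln(1) by simp
  with lower show "0 < sample_size c T"
    by linarith
  have "real T powr (1 + c) \<le> real T ^ 2"
    using T c(2) powr_mono[of "1 + c" 2 "real T"] by (simp add: powr_realpow)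
  then have "24 * real T powr (1 + c) * ln (real T) \<le> 24 * real T ^ 2 * real T"
    using ln by (intro mult_mono) auto
  moreover have "1 \<le> real T ^ 3"
    using T by simp
  moreover have "real (sample_size c T) \<le> 24 * real T powr (1 + c) * ln (real T) + 1"
    using ln(1) unfolding sample_size_def by (simp add: of_nat_ceiling)
  ultimately show "real (sample_size c T) \<le> 25 * real T ^ 3"
    by (simp add: power3_eq_cube power2_eq_square)
qed

lemma prob_pmf_of_set_true_count:
  assumes "1 \<le> N"
  shows "measure_pmf.prob (pmf_of_set {1..N}) {i. X i = j} = real (true_count X N j) / real N"
  using assms by (simp add: measure_pmf_of_set true_count_def Int_def)

lemma sum_true_count_le:
  assumes "finite J"
  shows "(\<Sum>j\<in>J. true_count X N j) \<le> N"
proof -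
  have "(\<Sum>j\<in>J. true_count X N j) = card (\<Union>j\<in>J. {i \<in> {1..N}. X i = j})"
    unfolding true_count_def using assms by (intro card_UN_disjoint[symmetric]) auto
  also have "\<dots> \<le> card {1..N}"
    by (intro card_mono) auto
  finally show ?thesis by simp
qed

lemma abs_estimate_sub_true_count_le:
  fixes X :: "nat \<Rightarrow> nat" and N U j :: nat and d :: real
  defines "q \<equiv> real (true_count X N j) / real N"
  assumes U: "0 < U" and N: "0 < N"
    and dev: "\<bar>real (sample_count X U idx j) - real U * q\<bar> \<le> real U * q / d + real U / real T"
  shows "\<bar>estimate X N U idx j - real (true_count X N j)\<bar> \<le> real N / real T + real (true_count X N j) / d"
proof -
  have "estimate X N U idx j - real (true_count X N j)
      = real N / real U * (real (sample_count X U idx j) - real U * q)"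
    using U N by (simp add: estimate_def q_def field_simps)
  also have "\<bar>\<dots>\<bar> \<le> real N / real U * (real U * q / d + real U / real T)"
    unfolding abs_mult abs_divide abs_of_nat using dev by (intro mult_left_mono) auto
  also have "\<dots> = real N / real T + real (true_count X N j) / d"
    using U N by (simp add: q_def field_simps)
  finally show ?thesis .
qed

lemma prob_sample_count_ge:
  fixes X :: "nat \<Rightarrow> nat" and N T j :: nat and c :: real
  defines "U \<equiv> sample_size c T" and "q \<equiv> real (true_count X N j) / real N"
  assumes N: "1 \<le> N" and T_ge: "2 \<le> T" and c: "0 \<le> c" "c \<le> 1"
  shows "measure_pmf.prob (index_sample N U)
      {idx. real U * q * (1 + 1 / real T powr c) + real U / real T \<le> real (sample_count X U idx j)}
    \<le> 50 * q / real T"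
proof -
  define d where "d = real T powr c"
  define m where "m = real U / real T"
  define s where "s = 1 / (2 * d)"
  define a where "a = real U * q * (1 + 1 / d) + m"
  have T: "2 \<le> real T" using T_ge by simp
  have d: "1 \<le> d" using T c by (simp add: d_def ge_one_powr_ge_zero)
  have q: "0 \<le> q" by (simp add: q_def)
  have "24 * ln (real T) \<le> m / d"
    using sample_size_bounds(1)[OF T_ge c] by (simp add: U_def m_def d_def)
  then have sm: "12 * ln (real T) \<le> s * m" by (simp add: s_def field_simps)
  have "s * m \<le> s * a"
    using q d by (intro mult_left_mono) (auto simp: a_def s_def)
  moreover have "ln 2 \<le> 12 * ln (real T)"
    using T ln_le_cancel_iff[of 2 "real T"] ln_gt_zero[of 2] by linarith
  ultimately have "exp (ln 2) \<le> exp (s * a)"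
    using sm by (simp only: exp_le_cancel_iff)
  then have "2 \<le> exp (s * a)" by simp
  moreover have "real U * q * (1 + s) + m \<le> a"
    using q d by (auto simp: a_def s_def field_simps intro!: mult_left_mono)
  moreover have s: "0 < s" "s \<le> 1" using d by (simp_all add: s_def)
  ultimately have "measure_pmf.prob (index_sample N U) {idx. a \<le> real (sample_count X U idx j)}
      \<le> 4 * s * real U * q * exp (- s * m)"
    using prob_card_Pi_pmf_ge[where A = "{..<U}" and p = "pmf_of_set {1..N}" and P = "\<lambda>i. X i = j"
        and d = 0 and s = s and a = a and t = m] N
    unfolding prob_pmf_of_set_true_count[OF N] q_def[symmetric]
    by (simp add: index_sample_def sample_count_def)
  also have "\<dots> \<le> 2 * (25 * real T ^ 3) * q * (1 / real T ^ 12)"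
  proof -
    have "exp (- s * m) \<le> exp (- (real 12 * ln (real T)))" using sm by simp
    also have "\<dots> = 1 / real T ^ 12" using T by (intro exp_minus_of_nat_mult_ln) simp
    finally have "exp (- s * m) \<le> 1 / real T ^ 12" .
    moreover have "4 * s \<le> 2" using d by (simp add: s_def field_simps)
    ultimately show ?thesis
      using sample_size_bounds(2)[OF T_ge c] q s
      by (intro mult_mono) (auto simp: U_def)
  qed
  also have "\<dots> = 50 * q / real T ^ 9"
    using T by (simp add: field_simps power_add[symmetric] eval_nat_numeral)
  also have "\<dots> \<le> 50 * q / real T"
    using T q by (intro divide_left_mono) (auto intro: order.trans[OF _ power_increasing[of 1 9]])
  finally show ?thesis by (simp add: a_def d_def m_def)
qed

lemma prob_sample_count_le:
  fixes X :: "nat \<Rightarrow> nat" and N T j :: nat and c :: real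
  defines "U \<equiv> sample_size c T" and "q \<equiv> real (true_count X N j) / real N"
  assumes N: "1 \<le> N" and T_ge: "2 \<le> T" and c: "0 \<le> c" "c \<le> 1"
  shows "measure_pmf.prob (index_sample N U)
      {idx. real (sample_count X U idx j) \<le> real U * q * (1 - 1 / real T powr c) - real U / real T}
    \<le> q / real T"
proof (cases "real U * q * (1 - 1 / real T powr c) < real U / real T")
  case True
  then show ?thesis by (simp add: q_def)
next
  case False
  define d where "d = real T powr c"
  define m where "m = real U / real T"
  define b where "b = real U * q * (1 - 1 / d) - m"
  have T: "2 \<le> real T" using T_ge by simp
  have d: "1 \<le> d" using T c by (simp add: d_def ge_one_powr_ge_zero)
  have q: "0 \<le> q" by (simp add: q_def)
  have "measure_pmf.prob (index_sample N U) {idx. real (sample_count X U idx j) \<le> b}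
      \<le> exp (1 / d * b - real U * q * (1 / d - (1 / d)\<^sup>2))"
    using prob_card_Pi_pmf_le[where A = "{..<U}" and p = "pmf_of_set {1..N}" and P = "\<lambda>i. X i = j"
        and d = 0 and s = "1 / d" and b = b] N d
    unfolding prob_pmf_of_set_true_count[OF N] q_def[symmetric]
    by (simp add: index_sample_def sample_count_def)
  also have "1 / d * b - real U * q * (1 / d - (1 / d)\<^sup>2) = - (m / d)"
    using d by (simp add: b_def field_simps power2_eq_square)
  also have "exp (- (m / d)) \<le> exp (- (real 24 * ln (real T)))"
    using sample_size_bounds(1)[OF T_ge c] by (simp add: U_def m_def d_def)
  also have "\<dots> = 1 / real T ^ 24" using T by (intro exp_minus_of_nat_mult_ln) simp
  also have "\<dots> \<le> 1 / real T / real T"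
    using T by (simp add: power2_eq_square[symmetric] divide_left_mono power_increasing)
  also have "\<dots> \<le> q / real T"
  proof -
    have "real U * q * (1 - 1 / d) \<le> real U * q"
      using q d by (intro mult_left_le) auto
    then have "real U / real T \<le> real U * q"
      using False by (simp add: d_def)
    then have "1 / real T \<le> q"
      using T sample_size_bounds(3)[OF T_ge c] by (simp add: U_def field_simps)
    then show ?thesis using T divide_right_mono[of "1 / real T" q "real T"] by simp
  qed
  finally show ?thesis by (simp add: b_def d_def m_def)
qed

lemma prob_estimate_deviation_le:
  assumes N: "1 \<le> N" and T_ge: "2 \<le> T" and c: "0 \<le> c" "c \<le> 1"
  shows "measure_pmf.prob (index_sample N (sample_size c T))
      {idx. real N / real T + real (true_count X N j) / real T powr c
            < \<bar>estimate X N (sample_size c T) idx j - real (true_count X N j)\<bar>}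
    \<le> 51 / real T * (real (true_count X N j) / real N)"
proof -
  define U where "U = sample_size c T"
  define q where "q = real (true_count X N j) / real N"
  define d where "d = real T powr c"
  let ?P = "measure_pmf.prob (index_sample N U)"
  let ?Z = "\<lambda>idx. real (sample_count X U idx j)"
  have "{idx. real N / real T + real (true_count X N j) / d
            < \<bar>estimate X N U idx j - real (true_count X N j)\<bar>}
      \<subseteq> {idx. real U * q * (1 + 1 / d) + real U / real T \<le> ?Z idx}
        \<union> {idx. ?Z idx \<le> real U * q * (1 - 1 / d) - real U / real T}"
  proof (intro subsetI, rule ccontr)
    fix idx
    assume "idx \<notin> {idx. real U * q * (1 + 1 / d) + real U / real T \<le> ?Z idx}
        \<union> {idx. ?Z idx \<le> real U * q * (1 - 1 / d) - real U / real T}"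
    then have "\<bar>?Z idx - real U * q\<bar> \<le> real U * q / d + real U / real T"
      by (auto simp: field_simps)
    then have "\<bar>estimate X N U idx j - real (true_count X N j)\<bar>
        \<le> real N / real T + real (true_count X N j) / d"
      using N sample_size_bounds(3)[OF T_ge c]
      unfolding U_def q_def by (intro abs_estimate_sub_true_count_le) auto
    moreover assume "idx \<in> {idx. real N / real T + real (true_count X N j) / d
            < \<bar>estimate X N U idx j - real (true_count X N j)\<bar>}"
    ultimately show False by simp
  qed
  then have "?P {idx. real N / real T + real (true_count X N j) / d
            < \<bar>estimate X N U idx j - real (true_count X N j)\<bar>}
      \<le> ?P ({idx. real U * q * (1 + 1 / d) + real U / real T \<le> ?Z idx}
        \<union> {idx. ?Z idx \<le> real U * q * (1 - 1 / d) - real U / real T})"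
    by (rule measure_pmf.finite_measure_mono) simp
  also have "\<dots> \<le> ?P {idx. real U * q * (1 + 1 / d) + real U / real T \<le> ?Z idx}
        + ?P {idx. ?Z idx \<le> real U * q * (1 - 1 / d) - real U / real T}"
    by (rule measure_Un_le) simp_all
  also have "\<dots> \<le> 50 * q / real T + q / real T"
    using prob_sample_count_ge[OF assms, of X j] prob_sample_count_le[OF assms, of X j]
    unfolding U_def q_def d_def by (rule add_mono)
  finally show ?thesis
    by (simp add: U_def q_def d_def field_simps)
qed

theorem lemma11:
  fixes c :: real
  assumes "0 < c" and "c \<le> 1"
  shows "\<exists>C::real. \<exists>T0::nat. \<forall>(N::nat) (M::nat) (X::nat \<Rightarrow> nat) (T::nat).
     N \<ge> 1 \<longrightarrow> (\<forall>i\<in>{1..N}. X i \<in> {1..M}) \<longrightarrow> T \<ge> T0 \<longrightarrow> T > 0 \<longrightarrow>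
     measure_pmf.prob (index_sample N (sample_size c T))
       {idx. \<forall>j\<in>{1..M}.
          \<bar>estimate X N (sample_size c T) idx j - real (true_count X N j)\<bar>
            \<le> real N / real T + real (true_count X N j) / real T powr c}
     \<ge> 1 - C / real T"
proof (intro exI[of _ "51::real"] exI[of _ "2::nat"] allI impI)
  fix N M T :: nat and X :: "nat \<Rightarrow> nat"
  assume N: "N \<ge> 1" and "\<forall>i\<in>{1..N}. X i \<in> {1..M}" and T: "T \<ge> 2" and "T > 0"
  let ?P = "measure_pmf.prob (index_sample N (sample_size c T))"
  let ?k = "\<lambda>j. real (true_count X N j)"
  define B where "B j = {idx. real N / real T + ?k j / real T powr c
      < \<bar>estimate X N (sample_size c T) idx j - ?k j\<bar>}" for j
  have "?P (\<Union>j\<in>{1..M}. B j) \<le> (\<Sum>j\<in>{1..M}. ?P (B j))"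
    by (rule measure_pmf.finite_measure_subadditive_finite) auto
  also have "\<dots> \<le> (\<Sum>j\<in>{1..M}. 51 / real T * (?k j / real N))"
    unfolding B_def using N T assms by (intro sum_mono prob_estimate_deviation_le) auto
  also have "\<dots> = 51 / real T * ((\<Sum>j\<in>{1..M}. ?k j) / real N)"
    by (simp add: sum_distrib_left sum_divide_distrib)
  also have "\<dots> \<le> 51 / real T"
    using sum_true_count_le[of "{1..M}" X N] N
    by (intro mult_left_le) (simp_all flip: of_nat_sum)
  finally have "1 - 51 / real T \<le> 1 - ?P (\<Union>j\<in>{1..M}. B j)" by simp
  also have "\<dots> = ?P (UNIV - (\<Union>j\<in>{1..M}. B j))"
    using measure_pmf.prob_compl[of "\<Union>j\<in>{1..M}. B j"] by simp
  finally show "1 - 51 / real T \<le> ?P {idx. \<forall>j\<in>{1..M}.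
      \<bar>estimate X N (sample_size c T) idx j - ?k j\<bar> \<le> real N / real T + ?k j / real T powr c}"
    by (simp add: B_def not_less Diff_eq set_eq_iff[symmetric] Compl_eq)
qed

end
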